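(* Let $(M_0,d,\Gamma)$ be a cone-like space. For every $x\in M_0$ there is a constant $K_x>0$ such that $d(x,f(x))<K_x$ for every $f\in\Gamma$ with $\rho(f)<1$.
   Context: A cone-like space is a locally compact metric space $(M_0,d)$ together with a finitely generated, non-trivial group $\Gamma$ acting freely and properly discontinuously on $M_0$ by homotheties (i.e. for each $f\in\Gamma$ there is $\rho(f)>0$ with $d(f(x),f(y))=\rho(f)d(x,y)$ for all $x,y$), such that the identity is the only element of $\Gamma$ acting as an isometry, and such that the quotient $M_0/\Gamma$ is compact. (Such a $\Gamma$ is necessarily Abelian.) *)

theory Defs
  imports "HOL-Analysis.Analysis"
begin

inductive_set gen_group :: "('a \<Rightarrow> 'a) set \<Rightarrow> ('a \<Rightarrow> 'a) set" for S where
  gen_id: "id \<in> gen_group S"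
| gen_in: "f \<in> S \<Longrightarrow> f \<in> gen_group S"
| gen_inv: "f \<in> S \<Longrightarrow> inv f \<in> gen_group S"
| gen_comp: "f \<in> gen_group S \<Longrightarrow> g \<in> gen_group S \<Longrightarrow> f \<circ> g \<in> gen_group S"

definition orbit :: "('a \<Rightarrow> 'a) set \<Rightarrow> 'a \<Rightarrow> 'a set" where
  "orbit G x = (\<lambda>f. f x) ` G"

text \<open>Quotient topology on the orbit space M/G (M = UNIV carrying its metric topology).\<close>
definition orbit_space_topology :: "('a::topological_space \<Rightarrow> 'a) set \<Rightarrow> 'a set topology" where
  "orbit_space_topology G =
     topology (\<lambda>U. U \<subseteq> range (orbit G) \<and> open (\<Union>U))"

text \<open>Cone-like space: the metric space is the type 'a (M_0 = UNIV), G the group,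
  rho the homothety ratio.\<close>
definition cone_like_space :: "('a::metric_space \<Rightarrow> 'a) set \<Rightarrow> (('a \<Rightarrow> 'a) \<Rightarrow> real) \<Rightarrow> bool" where
  "cone_like_space G rho \<longleftrightarrow>
     locally compact (UNIV :: 'a set)
   \<and> (\<forall>f\<in>G. bij f)
   \<and> (\<exists>S. finite S \<and> G = gen_group S)
   \<and> G \<noteq> {id}
   \<and> (\<forall>f\<in>G. rho f > 0 \<and> (\<forall>x y. dist (f x) (f y) = rho f * dist x y))
   \<and> (\<forall>f\<in>G. \<forall>x. f x = x \<longrightarrow> f = id)
   \<and> (\<forall>K. compact K \<longrightarrow> finite {f\<in>G. f ` K \<inter> K \<noteq> {}})
   \<and> (\<forall>f\<in>G. (\<forall>x y. dist (f x) (f y) = dist x y) \<longrightarrow> f = id)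
   \<and> compact_space (orbit_space_topology G)"

end

theory Submission
  imports Defs
begin

text \<open>
  Every element of the group of a cone-like space is a homothety, and the
  only isometry in the group is the identity.  For two homotheties f, g the map
  inv (g \<circ> f) \<circ> (f \<circ> g) has ratio rho f * rho g / (rho g * rho f) = 1, hence is an
  isometry of the group, hence the identity: the group is Abelian.
  Now fix x and some contraction g of the group (if there is none the claim is void).
  For any f with rho f < 1, commutativity and the triangle inequality give
    d(x, f x) \<le> d(x, g x) + d(g x, g (f x)) + d(f (g x), f x)
             \<le> d(x, g x) + rho g * d(x, f x) + rho f * d(x, g x),
  so d(x, f x) \<le> (1 + rho f) d(x, g x) / (1 - rho g) < 2 d(x, g x) / (1 - rho g) + 1.
  The file first proves closure of generated groups under inverses, then commutativity
  of homothety groups without non-trivial isometries, then the displacement estimate,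
  and finally combines them.
\<close>

lemma gen_group_inv_closed:
  assumes bij_all: "\<forall>f\<in>gen_group S. bij f" and f: "f \<in> gen_group S"
  shows "inv f \<in> gen_group S"
  using f
proof (induction f rule: gen_group.induct)
  case gen_id
  then show ?case using gen_group.gen_id by (metis inv_id)
next
  case (gen_in f)
  then show ?case by (rule gen_group.gen_inv)
next
  case (gen_inv f)
  have "bij f" using bij_all gen_group.gen_in[OF gen_inv] by blast
  then show ?case using gen_inv by (simp add: inv_inv_eq gen_group.gen_in)
next
  case (gen_comp f g)
  have "bij f" "bij g" using bij_all gen_comp by blast+
  then have "inv (f \<circ> g) = inv g \<circ> inv f" by (rule o_inv_distrib)
  then show ?case using gen_comp gen_group.gen_comp by metis
qed

text \<open>For homotheties f and g with g \<circ> f bijective, the commutator-like map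
  inv (g \<circ> f) \<circ> (f \<circ> g) preserves distances, since both sides have the same ratio.\<close>
lemma homothety_commutator_isometry:
  fixes f g :: "'a::metric_space \<Rightarrow> 'a"
  assumes f_hom: "\<And>x y. dist (f x) (f y) = a * dist x y" and a: "a > 0"
    and g_hom: "\<And>x y. dist (g x) (g y) = b * dist x y" and b: "b > 0"
    and bij_gf: "bij (g \<circ> f)"
  shows "dist ((inv (g \<circ> f) \<circ> (f \<circ> g)) y) ((inv (g \<circ> f) \<circ> (f \<circ> g)) z) = dist y z"
proof -
  define h where "h = inv (g \<circ> f) \<circ> (f \<circ> g)"
  have undo: "g (f (h w)) = f (g w)" for w
    unfolding h_def using surj_f_inv_f[OF bij_is_surj[OF bij_gf]] by simp
  have "b * a * dist (h y) (h z) = dist (g (f (h y))) (g (f (h z)))"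
    by (simp add: f_hom g_hom)
  also have "\<dots> = dist (f (g y)) (f (g z))" by (simp add: undo)
  also have "\<dots> = b * a * dist y z" by (simp add: f_hom g_hom)
  finally show ?thesis using a b unfolding h_def by simp
qed

lemma homothety_group_commute:
  fixes G :: "('a::metric_space \<Rightarrow> 'a) set"
  assumes comp_closed: "\<And>f g. f \<in> G \<Longrightarrow> g \<in> G \<Longrightarrow> f \<circ> g \<in> G"
    and inv_closed: "\<And>f. f \<in> G \<Longrightarrow> inv f \<in> G"
    and bij_all: "\<And>f. f \<in> G \<Longrightarrow> bij f"
    and hom: "\<And>f. f \<in> G \<Longrightarrow> rho f > 0 \<and> (\<forall>x y. dist (f x) (f y) = rho f * dist x y)"
    and isometry_id: "\<And>f. f \<in> G \<Longrightarrow> (\<forall>x y. dist (f x) (f y) = dist x y) \<Longrightarrow> f = id"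
    and f: "f \<in> G" and g: "g \<in> G"
  shows "f (g x) = g (f x)"
proof -
  define h where "h = inv (g \<circ> f) \<circ> (f \<circ> g)"
  have bij_gf: "bij (g \<circ> f)" using bij_all comp_closed f g by blast
  have "h \<in> G" unfolding h_def using comp_closed inv_closed f g by blast
  moreover have "\<forall>y z. dist (h y) (h z) = dist y z"
    unfolding h_def using homothety_commutator_isometry[OF _ _ _ _ bij_gf] hom f g by blast
  ultimately have "h = id" by (rule isometry_id)
  then have "inv (g \<circ> f) (f (g x)) = x" unfolding h_def by (metis comp_apply id_apply)
  then have "(g \<circ> f) (inv (g \<circ> f) (f (g x))) = g (f x)" by simp
  then show ?thesis using surj_f_inv_f[OF bij_is_surj[OF bij_gf]] by simp
qed

lemma commuting_homothety_displacement:
  fixes f g :: "'a::metric_space \<Rightarrow> 'a"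
  assumes f_hom: "\<And>x y. dist (f x) (f y) = a * dist x y" and a: "0 \<le> a" "a \<le> 1"
    and g_hom: "\<And>x y. dist (g x) (g y) = b * dist x y" and b: "b < 1"
    and commute: "f (g x) = g (f x)"
  shows "dist x (f x) \<le> 2 * dist x (g x) / (1 - b)"
proof -
  have "dist x (f x) \<le> dist x (g x) + dist (g x) (g (f x)) + dist (g (f x)) (f x)"
    by (meson dist_triangle order_trans add_right_mono)
  also have "dist (g x) (g (f x)) = b * dist x (f x)" by (rule g_hom)
  also have "dist (g (f x)) (f x) = a * dist x (g x)"
    by (metis commute dist_commute f_hom)
  also have "a * dist x (g x) \<le> dist x (g x)"
    using a by (simp add: mult_left_le_one_le)
  finally have "(1 - b) * dist x (f x) \<le> 2 * dist x (g x)" by (simp add: algebra_simps)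
  then show ?thesis using b by (simp add: field_simps)
qed

theorem lemma2p4:
  fixes G :: "('a::metric_space \<Rightarrow> 'a) set" and rho :: "('a \<Rightarrow> 'a) \<Rightarrow> real"
  assumes "cone_like_space G rho"
  shows "\<forall>x. \<exists>K>0. \<forall>f\<in>G. rho f < 1 \<longrightarrow> dist x (f x) < K"
proof
  fix x
  obtain S where S: "G = gen_group S" using assms unfolding cone_like_space_def by auto
  have bij_all: "\<And>f. f \<in> G \<Longrightarrow> bij f"
    and hom: "\<And>f. f \<in> G \<Longrightarrow> rho f > 0 \<and> (\<forall>x y. dist (f x) (f y) = rho f * dist x y)"
    and isometry_id: "\<And>f. f \<in> G \<Longrightarrow> (\<forall>x y. dist (f x) (f y) = dist x y) \<Longrightarrow> f = id"
    using assms unfolding cone_like_space_def by auto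
  have commute: "f (g y) = g (f y)" if "f \<in> G" "g \<in> G" for f g y
    using homothety_group_commute[OF _ _ bij_all hom isometry_id that] S
      gen_group.gen_comp gen_group_inv_closed bij_all by blast
  show "\<exists>K>0. \<forall>f\<in>G. rho f < 1 \<longrightarrow> dist x (f x) < K"
  proof (cases "\<exists>g\<in>G. rho g < 1")
    case False
    then show ?thesis by (auto intro: exI[of _ 1])
  next
    case True
    then obtain g where g: "g \<in> G" "rho g < 1" by blast
    have "dist x (f x) < 2 * dist x (g x) / (1 - rho g) + 1" if "f \<in> G" "rho f < 1" for f
      using commuting_homothety_displacement[of f "rho f" g "rho g" x] hom[OF that(1)]
        hom[OF g(1)] g(2) that(2) commute[OF that(1) g(1)] by fastforce
    moreover have "2 * dist x (g x) / (1 - rho g) + 1 > 0" using g by (simp add: add_nonneg_pos)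
    ultimately show ?thesis by blast
  qed
qed

end
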